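(* Let $m\geq 2$ be an integer and $(t_n)_{n=0}^{\infty}$ the $TM_m$ sequence. If $m=2$, then $(t_n)_{n=0}^{\infty}$ is palindromic. If $m>2$, then $(t_n)_{n=0}^{\infty}$ is not eventually palindromic.
   Context: For an integer $m\geq 2$, the $TM_m$ sequence $(t_n)_{n=0}^{\infty}$ is defined by: if $n=\sum_{j=0}^{k}c_j m^j$ is the base-$m$ expansion of $n\geq 0$ (digits $c_j\in\{0,\ldots,m-1\}$), then $t_n:=\sum_{j=0}^{k}c_j \bmod m$. A sequence $(x_i)_{i=0}^{\infty}$ is palindromic if there exists an increasing sequence of positive integers $(n_j)_{j\geq 1}$ such that for every $j$ and every $k\in\{0,\ldots,n_j\}$, $x_k=x_{n_j-k}$. It is eventually palindromic if there is $N$ such that $(x_{N+i})_{i=0}^{\infty}$ is palindromic. *)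

theory Defs
  imports Main
begin

fun digit_sum :: "nat \<Rightarrow> nat \<Rightarrow> nat" where
  "digit_sum m n = (if m < 2 \<or> n = 0 then 0 else n mod m + digit_sum m (n div m))"

declare digit_sum.simps [simp del]

definition TM :: "nat \<Rightarrow> nat \<Rightarrow> nat" where
  "TM m n = digit_sum m n mod m"

definition palindromic :: "(nat \<Rightarrow> 'a) \<Rightarrow> bool" where
  "palindromic x \<longleftrightarrow> (\<exists>ns :: nat \<Rightarrow> nat. strict_mono ns \<and> (\<forall>j. ns j > 0) \<and>
     (\<forall>j. \<forall>k \<le> ns j. x k = x (ns j - k)))"

definition eventually_palindromic :: "(nat \<Rightarrow> 'a) \<Rightarrow> bool" where
  "eventually_palindromic x \<longleftrightarrow> (\<exists>N. palindromic (\<lambda>i. x (N + i)))"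

end

theory Submission
  imports Defs
begin

text \<open>Write \<open>t\<close> for \<open>TM m\<close>. For \<open>k < m\<^sup>L\<close> the \<open>L\<close> lowest base-\<open>m\<close> digits of
  \<open>m\<^sup>L - 1 - k\<close> are the complements \<open>m - 1 - c\<^sub>j\<close> of those of \<open>k\<close>, so the two digit sums add up
  to \<open>L (m - 1)\<close>; for \<open>m = 2\<close> and \<open>L\<close> even they have the same parity, so \<open>t\<close> is symmetric on
  \<open>[0, 4\<^sup>L - 1]\<close>.
  For \<open>m > 2\<close>, adding 1 to a number whose last digit is not \<open>m - 1\<close> increases \<open>t\<close> by 1 modulo
  \<open>m\<close>. Among the first three positions of a palindromic window of length at least 4 there is one,
  \<open>k\<close>, such that neither \<open>k\<close> nor the mirror image of \<open>k + 1\<close> has last digit \<open>m - 1\<close>. Then \<open>t\<close>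
  rises by 1 from \<open>k\<close> to \<open>k + 1\<close> and also from the mirror of \<open>k + 1\<close> to the mirror of \<open>k\<close>, which
  the palindrome turns into \<open>t k = t k + 2 (mod m)\<close>, forcing \<open>m \<le> 2\<close>.\<close>

lemma digit_sum_mult_add:
  assumes "m \<ge> 2" "d < m"
  shows "digit_sum m (x * m + d) = d + digit_sum m x"
proof (cases "x * m + d = 0")
  case True
  then show ?thesis using assms by (auto simp: digit_sum.simps)
next
  case False
  have "(x * m + d) mod m = d" "(x * m + d) div m = x" using assms by auto
  then show ?thesis using False assms by (subst digit_sum.simps) auto
qed

lemma digit_sum_complement:
  assumes "m \<ge> 2" "k < m ^ L"
  shows "digit_sum m (m ^ L - 1 - k) + digit_sum m k = L * (m - 1)"
  using assms(2)
proof (induction L arbitrary: k)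
  case 0
  then show ?case by (simp add: digit_sum.simps)
next
  case (Suc L)
  define q r where "q = k div m" and "r = k mod m"
  have k: "k = q * m + r" and r: "r < m" unfolding q_def r_def using assms(1) by simp_all
  have q: "q < m ^ L"
    using Suc.prems unfolding q_def by (simp add: less_mult_imp_div_less mult.commute)
  then obtain t where t: "m ^ L = q + 1 + t" by (metis Suc_eq_plus1 Suc_leI le_add_diff_inverse)
  have "m ^ Suc L = (q + 1 + t) * m" using t by simp
  then have "m ^ Suc L - 1 - k = (m ^ L - 1 - q) * m + (m - 1 - r)"
    using k r t by (simp add: algebra_simps)
  then have "digit_sum m (m ^ Suc L - 1 - k) = (m - 1 - r) + digit_sum m (m ^ L - 1 - q)"
    using digit_sum_mult_add[OF assms(1), of "m - 1 - r" "m ^ L - 1 - q"] r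
    by (simp del: power_Suc)
  moreover have "digit_sum m k = r + digit_sum m q"
    using k digit_sum_mult_add[OF assms(1) r] by simp
  ultimately show ?case using Suc.IH[OF q] r by simp
qed

lemma TM_2_reflect:
  assumes "k < 4 ^ L"
  shows "TM 2 (4 ^ L - 1 - k) = TM 2 k"
proof -
  have "digit_sum 2 (2 ^ (2 * L) - 1 - k) + digit_sum 2 k = 2 * L"
    using digit_sum_complement[of 2 k "2 * L"] assms by (simp add: power_mult)
  moreover have "x mod 2 = y mod 2" if "x + y = 2 * L" for x y :: nat
    using that by presburger
  ultimately show ?thesis unfolding TM_def by (simp add: power_mult)
qed

lemma palindromic_TM_2: "palindromic (TM 2)"
  unfolding palindromic_def
proof (intro exI conjI allI impI)
  show "strict_mono (\<lambda>j. 4 ^ Suc j - 1 :: nat)"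
    by (rule strict_monoI) (simp add: diff_less_mono)
  fix j k :: nat
  show "0 < (4 ^ Suc j - 1 :: nat)"
    using one_less_power[of "4::nat" "Suc j"] by simp
  assume "k \<le> 4 ^ Suc j - 1"
  moreover have "(0::nat) < 4 ^ Suc j" by simp
  ultimately have "k < 4 ^ Suc j" by linarith
  then show "TM 2 k = TM 2 (4 ^ Suc j - 1 - k)" by (simp only: TM_2_reflect)
qed

lemma TM_Suc:
  assumes "m \<ge> 2" "a mod m \<noteq> m - 1"
  shows "TM m (a + 1) = (TM m a + 1) mod m"
proof -
  have "a mod m < m" using assms(1) by simp
  then have "a mod m + 1 < m" using assms(2) by linarith
  have "digit_sum m (a + 1) = digit_sum m (a div m * m + (a mod m + 1))" by simp
  also have "\<dots> = a mod m + 1 + digit_sum m (a div m)"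
    using digit_sum_mult_add[OF assms(1) \<open>a mod m + 1 < m\<close>] .
  also have "\<dots> = digit_sum m a + 1"
    using digit_sum_mult_add[OF assms(1) \<open>a mod m < m\<close>, of "a div m"] by simp
  finally show ?thesis unfolding TM_def by (simp add: mod_Suc_eq)
qed

lemma mod_succ_cycle_le_2:
  fixes a b m :: nat
  assumes "b = (a + 1) mod m" "a = (b + 1) mod m"
  shows "m \<le> 2"
proof (rule ccontr)
  assume "\<not> m \<le> 2"
  have "a = ((a + 1) mod m + 1) mod m" using assms by simp
  also have "\<dots> = (a + 2) mod m" by (simp add: mod_Suc_eq)
  finally have "a mod m = (a + 2) mod m" by (metis mod_mod_trivial)
  then have "m dvd 2" using mod_eq_dvd_iff_nat[of a "a + 2" m] by simp
  then show False using \<open>\<not> m \<le> 2\<close> by (simp add: dvd_imp_le)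
qed

lemma mod_add_distinct_small:
  fixes x k l m :: nat
  assumes "m > 2" "k < l" "l \<le> 2"
  shows "(x + k) mod m \<noteq> (x + l) mod m"
proof
  assume "(x + k) mod m = (x + l) mod m"
  then have "m dvd l - k" using mod_eq_dvd_iff_nat[of "x + k" "x + l" m] assms(2) by simp
  moreover have "0 < l - k" "l - k < m" using assms by auto
  ultimately show False using dvd_imp_le leD by blast
qed

lemma exists_both_not_last_digit:
  fixes a b m :: nat
  assumes "m > 2"
  shows "\<exists>k\<le>2. (a + k) mod m \<noteq> m - 1 \<and> (b + (2 - k)) mod m \<noteq> m - 1"
proof (rule ccontr)
  assume "\<not> ?thesis"
  then have "(a + k) mod m = m - 1 \<or> (b + (2 - k)) mod m = m - 1" if "k \<le> 2" for k
    using that by blast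
  from this[of 0] this[of 1] this[of 2] have
    "(a + 0) mod m = m - 1 \<or> (b + 2) mod m = m - 1"
    "(a + 1) mod m = m - 1 \<or> (b + 1) mod m = m - 1"
    "(a + 2) mod m = m - 1 \<or> (b + 0) mod m = m - 1" by simp_all
  moreover have "(a + 0) mod m \<noteq> (a + 1) mod m" "(a + 0) mod m \<noteq> (a + 2) mod m"
    "(a + 1) mod m \<noteq> (a + 2) mod m" "(b + 0) mod m \<noteq> (b + 1) mod m"
    "(b + 0) mod m \<noteq> (b + 2) mod m" "(b + 1) mod m \<noteq> (b + 2) mod m"
    by (rule mod_add_distinct_small[OF assms]; simp)+
  ultimately show False by argo
qed

lemma TM_not_palindromic_window:
  assumes "m > 2" "n \<ge> 3"
  shows "\<not> (\<forall>k\<le>n. TM m (N + k) = TM m (N + (n - k)))"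
proof
  assume pal: "\<forall>k\<le>n. TM m (N + k) = TM m (N + (n - k))"
  obtain k where k: "k \<le> 2" "(N + k) mod m \<noteq> m - 1"
    and k': "(N + n - 3 + (2 - k)) mod m \<noteq> m - 1"
    using exists_both_not_last_digit[OF assms(1)] by blast
  have mirror: "N + n - 3 + (2 - k) = N + (n - (k + 1))" "N + (n - (k + 1)) + 1 = N + (n - k)"
    using k assms(2) by auto
  have "TM m (N + (k + 1)) = (TM m (N + k) + 1) mod m"
    using TM_Suc[of m "N + k"] assms(1) k by simp
  moreover have "TM m (N + (n - k)) = (TM m (N + (n - (k + 1))) + 1) mod m"
    using TM_Suc[of m "N + (n - (k + 1))"] assms(1) k' by (simp only: mirror) simp
  ultimately have "m \<le> 2"
    using pal[rule_format, of k] pal[rule_format, of "k + 1"] k assms(2)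
    by (intro mod_succ_cycle_le_2[of "TM m (N + (k + 1))" "TM m (N + k)"]) simp_all
  then show False using assms(1) by simp
qed

theorem theorem2p2:
  fixes m :: nat
  assumes "m \<ge> 2"
  shows "(m = 2 \<longrightarrow> palindromic (TM m)) \<and> (m > 2 \<longrightarrow> \<not> eventually_palindromic (TM m))"
proof (intro conjI impI)
  assume "m = 2"
  then show "palindromic (TM m)" using palindromic_TM_2 by simp
next
  assume "m > 2"
  show "\<not> eventually_palindromic (TM m)"
  proof
    assume "eventually_palindromic (TM m)"
    then obtain N ns where "strict_mono (ns :: nat \<Rightarrow> nat)"
      and pal: "\<forall>j. \<forall>k \<le> ns j. TM m (N + k) = TM m (N + (ns j - k))"
      unfolding eventually_palindromic_def palindromic_def by blast
    then have "ns 3 \<ge> 3" by (metis strict_mono_imp_increasing)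
    then show False using TM_not_palindromic_window[OF \<open>m > 2\<close>] pal by blast
  qed
qed

end
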